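(* Let $f:\mathbb{R}^d\to\mathbb{R}$ be convex and differentiable with $L$-Lipschitz gradient and a minimizer $x^*$. For $x\in\mathbb{R}^d$ let $\phi_x(\lambda)=f(x-\lambda\nabla f(x))$. Let $x_1=y_1\in\mathbb{R}^d$, $\lambda_0\ge1/(3L)$, $\beta_1=1$, $\beta_{k+1}=\frac{1+\sqrt{1+4\beta_k^2}}{2}$, and for $k\ge1$: $\lambda_k=\max\{\lambda\in(0,\lambda_{k-1}]:\ \phi_{x_k}(2\lambda)\le\phi_{x_k}(\lambda)+\tfrac{\lambda}{2}\phi_{x_k}'(0)\}$, $y_{k+1}=x_k-\lambda_k\nabla f(x_k)$, $x_{k+1}=y_{k+1}+\frac{\beta_k-1}{\beta_{k+1}}(y_{k+1}-y_k)$. Then $\lambda_k\ge1/(3L)$ for all $k\ge1$, and there is a constant $D'$ depending only on $x_1$, $x^*$, $L$ such that $f(y_{k+1})-f(x^* )\le D'/k^2$ for all $k\ge1$.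
   Context: $\mathbb{R}^d$ carries the standard inner product and Euclidean norm $\|\cdot\|$; $\phi_x'(0)=-\|\nabla f(x)\|^2$ denotes the derivative of $\phi_x$ at $0$. This is the case $h\equiv0$ of the accelerated composite scheme, where the gradient mapping reduces to $\nabla f$. *)

theory Defs
  imports "HOL-Analysis.Analysis"
begin

definition phi :: "(real^'d \<Rightarrow> real) \<Rightarrow> (real^'d \<Rightarrow> real^'d) \<Rightarrow> real^'d \<Rightarrow> real \<Rightarrow> real" where
  "phi f g x l = f (x - l *\<^sub>R g x)"

text \<open>Here phi_x'(0) = - norm (g x)^2.\<close>
definition accel_ls :: "(real^'d \<Rightarrow> real) \<Rightarrow> (real^'d \<Rightarrow> real^'d) \<Rightarrow> real \<Rightarrow> real^'d \<Rightarrow>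
    (nat \<Rightarrow> real^'d) \<Rightarrow> (nat \<Rightarrow> real^'d) \<Rightarrow> (nat \<Rightarrow> real) \<Rightarrow> (nat \<Rightarrow> real) \<Rightarrow> bool" where
  "accel_ls f g L xs x y lam beta \<longleftrightarrow>
     convex_on UNIV f \<and>
     (\<forall>z. (f has_derivative (\<lambda>h. g z \<bullet> h)) (at z)) \<and>
     0 < L \<and> (\<forall>u v. norm (g u - g v) \<le> L * norm (u - v)) \<and>
     (\<forall>z. f xs \<le> f z) \<and>
     x 1 = y 1 \<and> lam 0 \<ge> 1 / (3 * L) \<and> beta 1 = 1 \<and>
     (\<forall>k\<ge>1. beta (Suc k) = (1 + sqrt (1 + 4 * (beta k)\<^sup>2)) / 2) \<and>
     (\<forall>k\<ge>1. lam k = (GREATEST l. 0 < l \<and> l \<le> lam (k - 1) \<and>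
          phi f g (x k) (2 * l) \<le> phi f g (x k) l + l / 2 * (- (norm (g (x k)))\<^sup>2))) \<and>
     (\<forall>k\<ge>1. y (Suc k) = x k - lam k *\<^sub>R g (x k)) \<and>
     (\<forall>k\<ge>1. x (Suc k) = y (Suc k) + ((beta k - 1) / beta (Suc k)) *\<^sub>R (y (Suc k) - y k))"

end

theory Submission
  imports Defs
begin

text \<open>
  Since the gradient is L-Lipschitz, every step l <= 1/(3L) passes the doubling test, so the
  largest admissible step never drops below 1/(3L). By convexity, a step that passes the test
  decreases f by at least l/2 |grad f|^2, which gives the usual estimate of a gradient step
  against an arbitrary comparison point. Comparing with the convex combination of y_k and x*
  with weights 1 - 1/beta_k and 1/beta_k, and using beta_(k+1)^2 - beta_(k+1) = beta_k^2 and
  the monotonicity of the step sizes, the energy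
  lambda_k beta_k^2 (f(y_(k+1)) - f(x*)) + |beta_k y_(k+1) - (beta_k - 1) y_k - x*|^2 / 2
  never exceeds |x_1 - x*|^2 / 2. As lambda_k >= 1/(3L) and beta_k >= k/2, this gives the
  rate with D' = 6 L |x_1 - x*|^2.
\<close>

lemma convex_on_line:
  fixes f :: "'a::real_vector \<Rightarrow> real"
  assumes "convex_on UNIV f"
  shows "convex_on UNIV (\<lambda>t::real. f (a + t *\<^sub>R d))"
proof (rule convex_onI)
  fix s x y :: real assume s: "0 < s" "s < 1"
  have "a + ((1 - s) *\<^sub>R x + s *\<^sub>R y) *\<^sub>R d = (1 - s) *\<^sub>R (a + x *\<^sub>R d) + s *\<^sub>R (a + y *\<^sub>R d)"
    by (simp add: algebra_simps)
  then show "f (a + ((1 - s) *\<^sub>R x + s *\<^sub>R y) *\<^sub>R d) \<le> (1 - s) * f (a + x *\<^sub>R d) + s * f (a + y *\<^sub>R d)"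
    using convex_onD[OF assms, of s] s by simp
qed auto

lemma has_real_derivative_along_line:
  fixes f :: "'a::real_inner \<Rightarrow> real"
  assumes "\<forall>z. (f has_derivative (\<lambda>h. g z \<bullet> h)) (at z)"
  shows "((\<lambda>t. f (a + t *\<^sub>R d)) has_real_derivative (g (a + t *\<^sub>R d) \<bullet> d)) (at t)"
proof -
  have "((\<lambda>t. a + t *\<^sub>R d) has_derivative (\<lambda>h. h *\<^sub>R d)) (at t)"
    by (auto intro!: derivative_eq_intros)
  from has_derivative_compose[OF this assms[rule_format, of "a + t *\<^sub>R d"]]
  have "((\<lambda>t. f (a + t *\<^sub>R d)) has_derivative (\<lambda>h. g (a + t *\<^sub>R d) \<bullet> (h *\<^sub>R d))) (at t)"
    by (simp add: o_def)
  then show ?thesis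
    by (simp add: has_field_derivative_def mult_commute_abs)
qed

lemma convex_gradient_inequality:
  fixes f :: "'a::real_inner \<Rightarrow> real"
  assumes "convex_on UNIV f" and "\<forall>z. (f has_derivative (\<lambda>h. g z \<bullet> h)) (at z)"
  shows "f x + g x \<bullet> (z - x) \<le> f z"
proof -
  have "f (x + 1 *\<^sub>R (z - x)) - f (x + 0 *\<^sub>R (z - x)) \<ge> (g (x + 0 *\<^sub>R (z - x)) \<bullet> (z - x)) * (1 - 0)"
    using has_real_derivative_along_line[OF assms(2), of x "z - x" 0]
    by (intro convex_on_imp_above_tangent[OF convex_on_line[OF assms(1)]])
       (auto simp: has_field_derivative_at_within)
  then show ?thesis by simp
qed

lemma lipschitz_gradient_upper_bound:
  fixes f :: "'a::real_inner \<Rightarrow> real"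
  assumes der: "\<forall>z. (f has_derivative (\<lambda>h. g z \<bullet> h)) (at z)"
    and lip: "\<forall>u v. norm (g u - g v) \<le> L * norm (u - v)"
  shows "f y \<le> f x + g x \<bullet> (y - x) + L / 2 * (norm (y - x))\<^sup>2"
proof -
  define d where "d = y - x"
  define h where "h t = f (x + t *\<^sub>R d) - t * (g x \<bullet> d) - L / 2 * t\<^sup>2 * (norm d)\<^sup>2" for t
  have "h 1 \<le> h 0"
  proof (rule DERIV_nonpos_imp_nonincreasing[OF zero_le_one])
    fix t :: real assume t: "0 \<le> t" "t \<le> 1"
    define h' where "h' = g (x + t *\<^sub>R d) \<bullet> d - g x \<bullet> d - L / 2 * (2 * t) * (norm d)\<^sup>2"
    have "g (x + t *\<^sub>R d) \<bullet> d - g x \<bullet> d = (g (x + t *\<^sub>R d) - g x) \<bullet> d"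
      by (simp add: inner_diff_left)
    also have "\<dots> \<le> norm (g (x + t *\<^sub>R d) - g x) * norm d" by (rule norm_cauchy_schwarz)
    also have "\<dots> \<le> L * norm (t *\<^sub>R d) * norm d"
      using lip[rule_format, of "x + t *\<^sub>R d" x] by (simp add: mult_right_mono)
    also have "\<dots> = L / 2 * (2 * t) * (norm d)\<^sup>2" using t by (simp add: power2_eq_square)
    finally have "h' \<le> 0" by (simp add: h'_def)
    moreover have "DERIV h t :> h'"
      unfolding h_def h'_def
      by (rule has_real_derivative_along_line[OF der] derivative_eq_intros refl | simp)+
    ultimately show "\<exists>y. DERIV h t :> y \<and> y \<le> 0" by blast
  qed
  then show ?thesis by (simp add: h_def d_def)
qed

lemma lipschitz_gradient_doubled_step:
  fixes f :: "'a::real_inner \<Rightarrow> real"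
  assumes der: "\<forall>z. (f has_derivative (\<lambda>h. g z \<bullet> h)) (at z)"
    and lip: "\<forall>u v. norm (g u - g v) \<le> L * norm (u - v)"
    and l: "0 < l" "3 * L * l \<le> 1"
  shows "f (x - (2 * l) *\<^sub>R g x) \<le> f (x - l *\<^sub>R g x) - l / 2 * (norm (g x))\<^sup>2"
proof -
  define G where "G = g x"
  define a where "a = x - l *\<^sub>R G"
  have "x - (2 * l) *\<^sub>R G - a = - (l *\<^sub>R G)"
    by (simp add: a_def algebra_simps flip: scaleR_2)
  then have upper: "f (x - (2 * l) *\<^sub>R G) \<le> f a - l * (g a \<bullet> G) + L / 2 * l\<^sup>2 * (norm G)\<^sup>2"
    using lipschitz_gradient_upper_bound[OF der lip, of "x - (2 * l) *\<^sub>R G" a]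
    by (simp add: power_mult_distrib)
  have "norm (g a - G) \<le> L * l * norm G"
    using lip[rule_format, of a x] l by (simp add: a_def G_def)
  then have "(g a - G) \<bullet> G \<ge> - (L * l * (norm G)\<^sup>2)"
    using Cauchy_Schwarz_ineq2[of "g a - G" G] norm_ge_zero[of G]
    by (smt (verit, best) mult.assoc mult_right_mono power2_eq_square)
  then have "(norm G)\<^sup>2 - L * l * (norm G)\<^sup>2 \<le> g a \<bullet> G"
    by (simp add: inner_diff_left power2_norm_eq_inner)
  then have "l * ((norm G)\<^sup>2 - L * l * (norm G)\<^sup>2) \<le> l * (g a \<bullet> G)"
    using l by (intro mult_left_mono) auto
  moreover have "(3 * L * l) * (l / 2 * (norm G)\<^sup>2) \<le> l / 2 * (norm G)\<^sup>2"
    using mult_right_mono[OF l(2), of "l / 2 * (norm G)\<^sup>2"] l by simp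
  ultimately show ?thesis
    using upper by (simp add: a_def G_def power2_eq_square algebra_simps)
qed

text \<open>The midpoint of x and x - 2 l g x is x - l g x.\<close>

lemma convex_doubled_step_decrease:
  fixes f :: "'a::real_normed_vector \<Rightarrow> real"
  assumes cv: "convex_on UNIV f"
    and test: "f (x - (2 * l) *\<^sub>R G) \<le> f (x - l *\<^sub>R G) - l / 2 * (norm G)\<^sup>2"
  shows "f (x - l *\<^sub>R G) \<le> f x - l / 2 * (norm G)\<^sup>2"
proof -
  have "x - l *\<^sub>R G = (1 - 1/2) *\<^sub>R x + (1/2) *\<^sub>R (x - (2 * l) *\<^sub>R G)"
    by (simp add: algebra_simps flip: scaleR_2)
  then have "f (x - l *\<^sub>R G) \<le> (1 - 1/2) * f x + (1/2) * f (x - (2 * l) *\<^sub>R G)"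
    using convex_onD[OF cv, of "1/2" x "x - (2 * l) *\<^sub>R G"] by simp
  then show ?thesis using test by simp
qed

lemma gradient_step_estimate:
  fixes f :: "'a::real_inner \<Rightarrow> real"
  assumes cv: "convex_on UNIV f" and der: "\<forall>z. (f has_derivative (\<lambda>h. g z \<bullet> h)) (at z)"
    and l: "0 < l"
    and decrease: "f (x - l *\<^sub>R g x) \<le> f x - l / 2 * (norm (g x))\<^sup>2"
  shows "f (x - l *\<^sub>R g x) - f z \<le> ((norm (x - z))\<^sup>2 - (norm (x - l *\<^sub>R g x - z))\<^sup>2) / (2 * l)"
proof -
  have shift: "x - l *\<^sub>R g x - z = (x - z) - l *\<^sub>R g x" by (simp add: algebra_simps)
  have dist: "(norm (x - l *\<^sub>R g x - z))\<^sup>2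
      = (norm (x - z))\<^sup>2 + l\<^sup>2 * (norm (g x))\<^sup>2 - 2 * l * (g x \<bullet> (x - z))"
    unfolding shift using dot_norm_neg[of "x - z" "l *\<^sub>R g x"]
    by (simp add: inner_commute power_mult_distrib)
  have "f (x - l *\<^sub>R g x) - f z \<le> g x \<bullet> (x - z) - l / 2 * (norm (g x))\<^sup>2"
    using decrease convex_gradient_inequality[OF cv der, of x z] by (simp add: inner_diff_right)
  then have "2 * l * (f (x - l *\<^sub>R g x) - f z) \<le> 2 * l * (g x \<bullet> (x - z) - l / 2 * (norm (g x))\<^sup>2)"
    using l by (intro mult_left_mono) auto
  also have "\<dots> = (norm (x - z))\<^sup>2 - (norm (x - l *\<^sub>R g x - z))\<^sup>2"
    unfolding dist by (simp add: power2_eq_square algebra_simps)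
  finally show ?thesis
    using l by (simp add: pos_le_divide_eq mult.commute)
qed

lemma accelerated_step_estimate:
  fixes f :: "'a::real_inner \<Rightarrow> real"
  assumes cv: "convex_on UNIV f" and der: "\<forall>z. (f has_derivative (\<lambda>h. g z \<bullet> h)) (at z)"
    and l: "0 < l" and t: "1 \<le> t"
    and decrease: "f (x - l *\<^sub>R g x) \<le> f x - l / 2 * (norm (g x))\<^sup>2"
  defines "x' \<equiv> x - l *\<^sub>R g x"
  shows "l * t\<^sup>2 * (f x' - f xs) + (norm (t *\<^sub>R x' - (t - 1) *\<^sub>R y - xs))\<^sup>2 / 2
       \<le> l * (t\<^sup>2 - t) * (f y - f xs) + (norm (t *\<^sub>R x - (t - 1) *\<^sub>R y - xs))\<^sup>2 / 2"
proof -
  define z where "z = (1 - 1 / t) *\<^sub>R y + (1 / t) *\<^sub>R xs"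
  have fz: "f z \<le> (1 - 1 / t) * f y + (1 / t) * f xs"
    unfolding z_def by (rule convex_onD[OF cv]) (use t in auto)
  have tz: "t *\<^sub>R z = (t - 1) *\<^sub>R y + xs"
    using t by (simp add: z_def scaleR_add_right scaleR_diff_left scaleR_diff_right)
  have scaled_dist: "t\<^sup>2 * (norm (w - z))\<^sup>2 = (norm (t *\<^sub>R w - (t - 1) *\<^sub>R y - xs))\<^sup>2" for w
  proof -
    have "t *\<^sub>R (w - z) = t *\<^sub>R w - (t - 1) *\<^sub>R y - xs"
      by (simp add: scaleR_diff_right tz)
    then show ?thesis
      using t by (metis abs_of_nonneg norm_scaleR order.trans power_mult_distrib zero_le_one)
  qed
  have "f x' - f z \<le> ((norm (x - z))\<^sup>2 - (norm (x' - z))\<^sup>2) / (2 * l)"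
    unfolding x'_def by (rule gradient_step_estimate[OF cv der l decrease])
  with fz have "f x' - f xs \<le> (1 - 1 / t) * (f y - f xs) + ((norm (x - z))\<^sup>2 - (norm (x' - z))\<^sup>2) / (2 * l)"
    by (simp add: algebra_simps)
  then have "l * t\<^sup>2 * (f x' - f xs)
      \<le> l * t\<^sup>2 * ((1 - 1 / t) * (f y - f xs) + ((norm (x - z))\<^sup>2 - (norm (x' - z))\<^sup>2) / (2 * l))"
    using l by (intro mult_left_mono) auto
  also have "\<dots> = l * (t\<^sup>2 - t) * (f y - f xs) + (t\<^sup>2 * (norm (x - z))\<^sup>2 - t\<^sup>2 * (norm (x' - z))\<^sup>2) / 2"
    using l t by (simp add: field_simps power2_eq_square)
  finally show ?thesis
    unfolding scaled_dist by (simp add: field_simps)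
qed

lemma beta_sequence_bounds:
  fixes beta :: "nat \<Rightarrow> real"
  assumes b1: "beta 1 = 1"
    and brec: "\<forall>k\<ge>1. beta (Suc k) = (1 + sqrt (1 + 4 * (beta k)\<^sup>2)) / 2"
    and k: "1 \<le> k"
  shows "(real k + 1) / 2 \<le> beta k" and "(beta (Suc k))\<^sup>2 - beta (Suc k) = (beta k)\<^sup>2"
proof -
  show "(real k + 1) / 2 \<le> beta k"
    using k
  proof (induction k rule: dec_induct)
    case (step n)
    have "2 * beta n \<le> sqrt (1 + 4 * (beta n)\<^sup>2)"
      by (rule real_le_rsqrt) (simp add: power_mult_distrib)
    then show ?case using step brec by simp
  qed (use b1 in simp)
  define s where "s = sqrt (1 + 4 * (beta k)\<^sup>2)"
  have s2: "s\<^sup>2 = 1 + 4 * (beta k)\<^sup>2" unfolding s_def by simp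
  have bs: "beta (Suc k) = (1 + s) / 2" using brec k by (simp add: s_def)
  have "(beta (Suc k))\<^sup>2 - beta (Suc k) = (s\<^sup>2 - 1) / 4"
    unfolding bs by (simp add: power2_eq_square field_simps)
  then show "(beta (Suc k))\<^sup>2 - beta (Suc k) = (beta k)\<^sup>2"
    using s2 by simp
qed

definition doubling_test :: "(real^'d \<Rightarrow> real) \<Rightarrow> (real^'d \<Rightarrow> real^'d) \<Rightarrow> real^'d \<Rightarrow> real \<Rightarrow> bool" where
  "doubling_test f g x l \<longleftrightarrow> phi f g x (2 * l) \<le> phi f g x l + l / 2 * (- (norm (g x))\<^sup>2)"

lemma doubling_test_iff:
  "doubling_test f g x l \<longleftrightarrow> f (x - (2 * l) *\<^sub>R g x) \<le> f (x - l *\<^sub>R g x) - l / 2 * (norm (g x))\<^sup>2"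
  by (simp add: doubling_test_def phi_def)

lemma closed_doubling_test:
  fixes f :: "real^'d \<Rightarrow> real" and x :: "real^'d"
  assumes der: "\<forall>z. (f has_derivative (\<lambda>h. g z \<bullet> h)) (at z)"
  shows "closed {l. doubling_test f g x l}"
proof -
  have f_cont: "continuous_on UNIV f"
    using has_derivative_continuous[OF der[rule_format]] by (intro continuous_at_imp_continuous_on) blast
  have line: "continuous_on UNIV (\<lambda>l. f (x - (c * l) *\<^sub>R g x))" for c
    by (rule continuous_on_compose2[OF f_cont]) (auto intro!: continuous_intros)
  have "closed {l. f (x - (2 * l) *\<^sub>R g x) \<le> f (x - (1 * l) *\<^sub>R g x) - l / 2 * (norm (g x))\<^sup>2}"
    by (intro closed_Collect_le line continuous_on_diff continuous_on_mult_right continuous_on_divide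
        continuous_on_id continuous_on_const) simp
  then show ?thesis by (simp add: doubling_test_iff)
qed

lemma greatest_doubling_test:
  fixes f :: "real^'d \<Rightarrow> real" and x :: "real^'d"
  assumes der: "\<forall>z. (f has_derivative (\<lambda>h. g z \<bullet> h)) (at z)"
    and lip: "\<forall>u v. norm (g u - g v) \<le> L * norm (u - v)" and L: "0 < L"
    and a: "0 < a"
  defines "m \<equiv> GREATEST l. 0 < l \<and> l \<le> a \<and> doubling_test f g x l"
  shows "min a (1 / (3 * L)) \<le> m" and "m \<le> a" and "doubling_test f g x m"
proof -
  define m0 where "m0 = min a (1 / (3 * L))"
  have m0: "0 < m0" "m0 \<le> a" "3 * L * m0 \<le> 1"
    using a L by (auto simp: m0_def min_def field_simps)
  text \<open>The admissible steps above m0 form a compact set containing m0, so their supremum is attained.\<close>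
  define T where "T = {m0..a} \<inter> {l. doubling_test f g x l}"
  have "closed T"
    unfolding T_def using closed_doubling_test[OF der] by (intro closed_Int closed_atLeastAtMost)
  moreover have "m0 \<in> T"
    using lipschitz_gradient_doubled_step[OF der lip m0(1,3)] m0 by (simp add: T_def doubling_test_iff)
  moreover have bdd: "bdd_above T" unfolding T_def by (intro bdd_aboveI[of _ a]) auto
  ultimately have sup_in: "Sup T \<in> T" using closed_contains_Sup by blast
  have "m = Sup T"
    unfolding m_def
  proof (rule Greatest_equality)
    show "0 < Sup T \<and> Sup T \<le> a \<and> doubling_test f g x (Sup T)"
      using sup_in m0 by (auto simp: T_def)
  next
    fix l assume l: "0 < l \<and> l \<le> a \<and> doubling_test f g x l"
    show "l \<le> Sup T"
    proof (cases "m0 \<le> l")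
      case True
      then show ?thesis using l cSup_upper[OF _ bdd] by (auto simp: T_def)
    qed (use sup_in in \<open>auto simp: T_def\<close>)
  qed
  then show "min a (1 / (3 * L)) \<le> m" and "m \<le> a" and "doubling_test f g x m"
    using sup_in by (auto simp: T_def m0_def)
qed

context
  fixes f :: "real^'d \<Rightarrow> real" and g :: "real^'d \<Rightarrow> real^'d" and L :: real and xs :: "real^'d"
    and x y :: "nat \<Rightarrow> real^'d" and lam beta :: "nat \<Rightarrow> real"
  assumes accel: "accel_ls f g L xs x y lam beta"
begin

lemma accel_step_size_eq:
  assumes "1 \<le> k"
  shows "lam k = (GREATEST l. 0 < l \<and> l \<le> lam (k - 1) \<and> doubling_test f g (x k) l)"
  using accel assms by (simp add: accel_ls_def doubling_test_def)

lemma accel_step_size_lower_bound: "1 / (3 * L) \<le> lam k"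
proof (induction k)
  case 0
  then show ?case using accel by (simp add: accel_ls_def)
next
  case (Suc k)
  have der: "\<forall>z. (f has_derivative (\<lambda>h. g z \<bullet> h)) (at z)"
    and lip: "\<forall>u v. norm (g u - g v) \<le> L * norm (u - v)" and L: "0 < L"
    using accel by (simp_all add: accel_ls_def)
  have "0 < lam k" using Suc L by (smt (verit) divide_pos_pos)
  from greatest_doubling_test(1)[OF der lip L this, of "x (Suc k)"]
  have "min (lam k) (1 / (3 * L)) \<le> lam (Suc k)"
    using accel_step_size_eq[of "Suc k"] by simp
  then show ?case using Suc by simp
qed

lemma accel_step_size_pos: "0 < lam k"
proof -
  have "0 < L" using accel by (simp add: accel_ls_def)
  then show ?thesis using accel_step_size_lower_bound[of k] by (smt (verit) divide_pos_pos)
qed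

lemma accel_step_size_test:
  assumes k: "1 \<le> k"
  shows "lam k \<le> lam (k - 1)" and "doubling_test f g (x k) (lam k)"
proof -
  have der: "\<forall>z. (f has_derivative (\<lambda>h. g z \<bullet> h)) (at z)"
    and lip: "\<forall>u v. norm (g u - g v) \<le> L * norm (u - v)" and L: "0 < L"
    using accel by (simp_all add: accel_ls_def)
  from greatest_doubling_test(2,3)[OF der lip L accel_step_size_pos[of "k - 1"], of "x k"]
  show "lam k \<le> lam (k - 1)" and "doubling_test f g (x k) (lam k)"
    unfolding accel_step_size_eq[OF k, symmetric] by simp_all
qed

lemma accel_energy_step:
  assumes k: "1 \<le> k"
  shows "lam k * (beta k)\<^sup>2 * (f (y (Suc k)) - f xs)
           + (norm (beta k *\<^sub>R y (Suc k) - (beta k - 1) *\<^sub>R y k - xs))\<^sup>2 / 2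
         \<le> lam k * ((beta k)\<^sup>2 - beta k) * (f (y k) - f xs)
           + (norm (beta k *\<^sub>R x k - (beta k - 1) *\<^sub>R y k - xs))\<^sup>2 / 2"
proof -
  have cv: "convex_on UNIV f" and der: "\<forall>z. (f has_derivative (\<lambda>h. g z \<bullet> h)) (at z)"
    and b1: "beta 1 = 1"
    and brec: "\<forall>k\<ge>1. beta (Suc k) = (1 + sqrt (1 + 4 * (beta k)\<^sup>2)) / 2"
    and y_step: "y (Suc k) = x k - lam k *\<^sub>R g (x k)"
    using accel k by (simp_all add: accel_ls_def)
  note accel_step_size_pos[of k]
  moreover have "1 \<le> beta k" using beta_sequence_bounds(1)[OF b1 brec k] k by simp
  moreover have "f (x k - lam k *\<^sub>R g (x k)) \<le> f (x k) - lam k / 2 * (norm (g (x k)))\<^sup>2"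
    using convex_doubled_step_decrease[OF cv] accel_step_size_test(2)[OF k]
    by (simp add: doubling_test_iff)
  ultimately show ?thesis
    unfolding y_step by (rule accelerated_step_estimate[OF cv der])
qed

lemma accel_energy_bound:
  assumes "1 \<le> k"
  shows "lam k * (beta k)\<^sup>2 * (f (y (Suc k)) - f xs)
           + (norm (beta k *\<^sub>R y (Suc k) - (beta k - 1) *\<^sub>R y k - xs))\<^sup>2 / 2
         \<le> (norm (x 1 - xs))\<^sup>2 / 2"
  using assms
proof (induction k rule: dec_induct)
  case base
  have "beta 1 = 1" and "x 1 = y 1" using accel by (simp_all add: accel_ls_def)
  then show ?case using accel_energy_step[of 1] by simp
next
  case (step j)
  have b1: "beta 1 = 1" and brec: "\<forall>k\<ge>1. beta (Suc k) = (1 + sqrt (1 + 4 * (beta k)\<^sup>2)) / 2"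
    and min: "\<forall>z. f xs \<le> f z"
    and x_step: "x (Suc j) = y (Suc j) + ((beta j - 1) / beta (Suc j)) *\<^sub>R (y (Suc j) - y j)"
    using accel step(1) by (simp_all add: accel_ls_def)
  define k where "k = Suc j"
  have beta_eq: "(beta k)\<^sup>2 - beta k = (beta j)\<^sup>2"
    using beta_sequence_bounds(2)[OF b1 brec step(1)] by (simp add: k_def)
  have "0 < beta k" using beta_sequence_bounds(1)[OF b1 brec, of k] by (simp add: k_def)
  then have "beta k *\<^sub>R x k = beta k *\<^sub>R y k + (beta j - 1) *\<^sub>R (y k - y j)"
    using x_step by (simp add: k_def scaleR_add_right)
  then have momentum: "beta k *\<^sub>R x k - (beta k - 1) *\<^sub>R y k - xs = beta j *\<^sub>R y k - (beta j - 1) *\<^sub>R y j - xs"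
    by (simp add: algebra_simps)
  have "lam k * (beta k)\<^sup>2 * (f (y (Suc k)) - f xs)
          + (norm (beta k *\<^sub>R y (Suc k) - (beta k - 1) *\<^sub>R y k - xs))\<^sup>2 / 2
        \<le> lam k * (beta j)\<^sup>2 * (f (y k) - f xs)
          + (norm (beta j *\<^sub>R y k - (beta j - 1) *\<^sub>R y j - xs))\<^sup>2 / 2"
    using accel_energy_step[of k] unfolding beta_eq momentum by (simp add: k_def)
  also have "lam k * (beta j)\<^sup>2 * (f (y k) - f xs) \<le> lam j * (beta j)\<^sup>2 * (f (y k) - f xs)"
    using accel_step_size_test(1)[of k] min by (intro mult_right_mono) (auto simp: k_def)
  finally show ?case
    using step(3) by (simp add: k_def)
qed

lemma accel_rate:
  assumes k: "1 \<le> k"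
  shows "f (y (Suc k)) - f xs \<le> 6 * L * (norm (x 1 - xs))\<^sup>2 / (real k)\<^sup>2"
proof -
  have L: "0 < L" and b1: "beta 1 = 1"
    and brec: "\<forall>k\<ge>1. beta (Suc k) = (1 + sqrt (1 + 4 * (beta k)\<^sup>2)) / 2"
    and gap: "0 \<le> f (y (Suc k)) - f xs"
    using accel by (simp_all add: accel_ls_def)
  have "(real k / 2)\<^sup>2 \<le> (beta k)\<^sup>2"
    using beta_sequence_bounds(1)[OF b1 brec k] by (intro power_mono) auto
  then have "1 / (3 * L) * ((real k)\<^sup>2 / 4) \<le> lam k * (beta k)\<^sup>2"
    using accel_step_size_lower_bound[of k] L
    by (intro mult_mono) (auto simp: power_divide intro: order_trans[rotated])
  then have "1 / (3 * L) * ((real k)\<^sup>2 / 4) * (f (y (Suc k)) - f xs)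
      \<le> lam k * (beta k)\<^sup>2 * (f (y (Suc k)) - f xs)"
    using gap by (rule mult_right_mono)
  also have "\<dots> \<le> (norm (x 1 - xs))\<^sup>2 / 2"
    using accel_energy_bound[OF k] by (smt (verit) zero_le_power2 divide_nonneg_nonneg)
  finally show ?thesis
    using L k by (simp add: field_simps)
qed

end

theorem corollary3p2:
  "\<exists>C :: real^'d \<Rightarrow> real^'d \<Rightarrow> real \<Rightarrow> real.
     \<forall>(f :: real^'d \<Rightarrow> real) g L xs x y lam beta.
       accel_ls f g L xs x y lam beta \<longrightarrow>
         (\<forall>k\<ge>1. lam k \<ge> 1 / (3 * L)) \<and>
         (\<forall>k\<ge>1. f (y (Suc k)) - f xs \<le> C (x 1) xs L / (real k)\<^sup>2)"
  using accel_step_size_lower_bound accel_rate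
  by (intro exI[of _ "\<lambda>x1 xs L. 6 * L * (norm (x1 - xs))\<^sup>2"]) blast

end
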